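(* There exists an NWBTS$(8;b)$ for every $b\ge0$ with $b\equiv 9,10,18,19,27,28,29,37,38,46,47\pmod{56}$.
   Context: A triple system TS$(v;b)$ is a pair $(V,\mathcal F)$, $V$ a set of $v\ge3$ points, $\mathcal F$ a multiset of $b$ 3-subsets (blocks). $\lambda_{x_1,\dots,x_j}$ is the number of blocks containing $\{x_1,\dots,x_j\}$; $j$-balanced means $|\lambda_{x_1,\dots,x_j}-\lambda_{y_1,\dots,y_j}|\le1$ for all $j$-subsets. Associated pair $(\lambda,\varepsilon)$ of $(v,b)$: integers with $3b=\lambda\binom v2+\varepsilon$, $-v/2<\varepsilon<v/2$. (C1): $v\equiv 2\pmod 3$ and $b\in\{\lfloor \lambda v(v-1)/6\rfloor,\lceil \lambda v(v-1)/6\rceil\}$ for an integer $\lambda$ with $\lambda\equiv1,2\pmod 3$ if $v\equiv5\pmod6$ and $\lambda\equiv 2,4\pmod 6$ if $v\equiv2\pmod 6$. (C2): $v$ even and $\lambda v(v-1)/6-v/6<b<\lambda v(v-1)/6+v/6$ for an odd integer $\lambda$. In both, $\lambda$ is that of the associated pair. Defect graph (when all $\lambda_{x,y}\in\{\lambda-1,\lambda,\lambda+1\}$): graph on $V$ with edges the pairs with $\lambda_{x,y}=\lambda+1$ (label $+1$) or $\lambda-1$ (label $-1$); isomorphisms preserve labels. $G_{\pm1}$: triangle with two $\pm1$ edges and one $\mp1$ edge; $G_{\pm2}$: 4-cycle with three $\pm1$ edges and one $\mp1$ edge. For even $v$: $H^0_{v,\varepsilon}$: perfect matching with $(v+2\varepsilon)/4$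 edges $+1$, $(v-2\varepsilon)/4$ edges $-1$; $H^1_{v,\varepsilon}$: disjoint union of a $K_{1,3}$ with two $+1$ and one $-1$ edge and a matching of the other $v-4$ vertices with $(v-6+2\varepsilon)/4$ edges $+1$, $(v-2-2\varepsilon)/4$ edges $-1$; $H^2_{v,\varepsilon}$: disjoint union of a $K_{1,3}$ with one $+1$ and two $-1$ edges and a matching of the other $v-4$ vertices with $(v-2+2\varepsilon)/4$ edges $+1$, $(v-6-2\varepsilon)/4$ edges $-1$. Nearly 2-balanced: all $\lambda_{x,y}\in\{\lambda-1,\lambda,\lambda+1\}$ and defect graph $\cong G_\varepsilon$ under (C1); under (C2) $\cong H^0_{v,\varepsilon}$ if $\varepsilon\equiv v/2\pmod 2$, else $\cong H^1_{v,\varepsilon}$ or $H^2_{v,\varepsilon}$. An NWBTS$(v;b)$ is a nearly 2-balanced, 3-balanced TS$(v;b)$ with $(v,b)$ in (C1) or (C2). (For $v=8$ the listed $b$ are exactly those for which $(8,b)$ satisfies (C1) or (C2).) *)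

theory Defs
  imports Complex_Main "HOL-Library.Multiset"
begin

definition TS :: "'a set \<Rightarrow> 'a set multiset \<Rightarrow> bool" where
  "TS V F \<longleftrightarrow> finite V \<and> card V \<ge> 3 \<and> (\<forall>B \<in># F. B \<subseteq> V \<and> card B = 3)"

definition lam :: "'a set multiset \<Rightarrow> 'a set \<Rightarrow> nat" where
  "lam F S = size (filter_mset (\<lambda>B. S \<subseteq> B) F)"

definition j_balanced :: "nat \<Rightarrow> 'a set \<Rightarrow> 'a set multiset \<Rightarrow> bool" where
  "j_balanced j V F \<longleftrightarrow>
     (\<forall>S T. S \<subseteq> V \<longrightarrow> T \<subseteq> V \<longrightarrow> card S = j \<longrightarrow> card T = j \<longrightarrow>
        \<bar>int (lam F S) - int (lam F T)\<bar> \<le> 1)"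

definition assoc_pair :: "nat \<Rightarrow> nat \<Rightarrow> int \<Rightarrow> int \<Rightarrow> bool" where
  "assoc_pair v b l e \<longleftrightarrow> 3 * int b = l * int (v choose 2) + e \<and>
      - real v / 2 < real_of_int e \<and> real_of_int e < real v / 2"

definition C1 :: "nat \<Rightarrow> nat \<Rightarrow> int \<Rightarrow> bool" where
  "C1 v b l \<longleftrightarrow> v mod 3 = 2 \<and>
     (int b = \<lfloor>real_of_int l * real v * (real v - 1) / 6\<rfloor> \<or>
      int b = \<lceil>real_of_int l * real v * (real v - 1) / 6\<rceil>) \<and>
     (v mod 6 = 5 \<longrightarrow> l mod 3 = 1 \<or> l mod 3 = 2) \<and>
     (v mod 6 = 2 \<longrightarrow> l mod 6 = 2 \<or> l mod 6 = 4)"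

definition C2 :: "nat \<Rightarrow> nat \<Rightarrow> int \<Rightarrow> bool" where
  "C2 v b l \<longleftrightarrow> even v \<and> odd l \<and>
     real_of_int l * real v * (real v - 1) / 6 - real v / 6 < real b \<and>
     real b < real_of_int l * real v * (real v - 1) / 6 + real v / 6"

text \<open>Labelled graphs are given by a vertex set and a symmetric label function
  (label 0 = no edge). Isomorphism = label-preserving bijection of vertex sets.\<close>
definition lab_iso :: "'a set \<Rightarrow> ('a \<Rightarrow> 'a \<Rightarrow> int) \<Rightarrow> 'b set \<Rightarrow> ('b \<Rightarrow> 'b \<Rightarrow> int) \<Rightarrow> bool" where
  "lab_iso V d W g \<longleftrightarrow> (\<exists>f. bij_betw f V W \<and>
      (\<forall>x\<in>V. \<forall>y\<in>V. x \<noteq> y \<longrightarrow> d x y = g (f x) (f y)))"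

definition defect :: "'a set multiset \<Rightarrow> int \<Rightarrow> 'a \<Rightarrow> 'a \<Rightarrow> int" where
  "defect F l x y = int (lam F {x, y}) - l"

definition elab :: "(nat \<times> nat \<times> int) list \<Rightarrow> nat \<Rightarrow> nat \<Rightarrow> int" where
  "elab E x y = sum_list (map (\<lambda>(a, b, s). if {a, b} = {x, y} then s else 0) E)"

text \<open>Matching on vertices s, s+1, ...: edges {s+2i, s+2i+1};
  the first p edges have label +1, the next q edges label -1.\<close>
definition mlab :: "nat \<Rightarrow> nat \<Rightarrow> nat \<Rightarrow> nat \<Rightarrow> nat \<Rightarrow> int" where
  "mlab s p q x y =
     (if x \<noteq> y \<and> s \<le> x \<and> s \<le> y \<and> (x - s) div 2 = (y - s) div 2 then
        (if (x - s) div 2 < p then 1 else if (x - s) div 2 < p + q then -1 else 0)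
      else 0)"

text \<open>G_{+1}, G_{-1}: triangle on 0,1,2; G_{+2}, G_{-2}: 4-cycle 0-1-2-3-0
  (the remaining vertices of {0..<v} are isolated).\<close>
definition Gmod :: "int \<Rightarrow> nat \<Rightarrow> nat \<Rightarrow> int" where
  "Gmod e =
     (if e = 1 then elab [(0,1,1),(1,2,1),(0,2,-1)]
      else if e = -1 then elab [(0,1,-1),(1,2,-1),(0,2,1)]
      else if e = 2 then elab [(0,1,1),(1,2,1),(2,3,1),(3,0,-1)]
      else if e = -2 then elab [(0,1,-1),(1,2,-1),(2,3,-1),(3,0,1)]
      else (\<lambda>x y. 0))"

definition H0 :: "nat \<Rightarrow> int \<Rightarrow> nat \<Rightarrow> nat \<Rightarrow> int" where
  "H0 v e = mlab 0 (nat ((int v + 2 * e) div 4)) (nat ((int v - 2 * e) div 4))"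

definition H1 :: "nat \<Rightarrow> int \<Rightarrow> nat \<Rightarrow> nat \<Rightarrow> int" where
  "H1 v e = (\<lambda>x y. elab [(0,1,1),(0,2,1),(0,3,-1)] x y +
       mlab 4 (nat ((int v - 6 + 2 * e) div 4)) (nat ((int v - 2 - 2 * e) div 4)) x y)"

definition H2 :: "nat \<Rightarrow> int \<Rightarrow> nat \<Rightarrow> nat \<Rightarrow> int" where
  "H2 v e = (\<lambda>x y. elab [(0,1,1),(0,2,-1),(0,3,-1)] x y +
       mlab 4 (nat ((int v - 2 + 2 * e) div 4)) (nat ((int v - 6 - 2 * e) div 4)) x y)"

definition pairs_near :: "'a set \<Rightarrow> 'a set multiset \<Rightarrow> int \<Rightarrow> bool" where
  "pairs_near V F l \<longleftrightarrow> (\<forall>x\<in>V. \<forall>y\<in>V. x \<noteq> y \<longrightarrow>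
      int (lam F {x, y}) \<in> {l - 1, l, l + 1})"

definition nearly_2bal_C1 :: "'a set \<Rightarrow> 'a set multiset \<Rightarrow> int \<Rightarrow> int \<Rightarrow> bool" where
  "nearly_2bal_C1 V F l e \<longleftrightarrow> pairs_near V F l \<and> e \<in> {-2, -1, 1, 2} \<and>
      lab_iso V (defect F l) {..<card V} (Gmod e)"

definition nearly_2bal_C2 :: "'a set \<Rightarrow> 'a set multiset \<Rightarrow> int \<Rightarrow> int \<Rightarrow> bool" where
  "nearly_2bal_C2 V F l e \<longleftrightarrow> pairs_near V F l \<and>
     (let v = card V in
      if e mod 2 = int (v div 2) mod 2 then lab_iso V (defect F l) {..<v} (H0 v e)
      else ((int v - 6 + 2 * e \<ge> 0 \<and> int v - 2 - 2 * e \<ge> 0 \<and>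
              lab_iso V (defect F l) {..<v} (H1 v e))
         \<or> (int v - 2 + 2 * e \<ge> 0 \<and> int v - 6 - 2 * e \<ge> 0 \<and>
              lab_iso V (defect F l) {..<v} (H2 v e))))"

definition NWBTS :: "'a set \<Rightarrow> 'a set multiset \<Rightarrow> bool" where
  "NWBTS V F \<longleftrightarrow> TS V F \<and> j_balanced 3 V F \<and>
     (\<exists>l e. assoc_pair (card V) (size F) l e \<and>
        ((C1 (card V) (size F) l \<and> nearly_2bal_C1 V F l e) \<or>
         (C2 (card V) (size F) l \<and> nearly_2bal_C2 V F l e)))"

end

theory Submission
  imports Defs
begin

text \<open>Adding the complete design on \<open>V\<close> (every 3-subset once) raises the count of every pair
  by \<open>|V| - 2\<close> and of every triple by 1. Hence it preserves 3-balance and the defect graph,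
  and it preserves (C1) and (C2) with \<open>\<lambda>\<close> increased by \<open>|V| - 2\<close> and \<open>b\<close> by \<open>C(|V|, 3)\<close>.
  For \<open>v = 8\<close> this shifts \<open>b\<close> by 56, so it suffices to exhibit one design for each of the
  eleven residues; these are explicit simple designs whose pair counts are checked by evaluation.\<close>

definition triples :: "'a set \<Rightarrow> 'a set multiset" where
  "triples V = mset_set {B. B \<subseteq> V \<and> card B = 3}"

lemma lam_plus: "lam (A + B) S = lam A S + lam B S"
  by (simp add: lam_def)

lemma lam_repeat_mset: "lam (repeat_mset k A) S = k * lam A S"
  by (induction k) (simp_all add: lam_plus, simp add: lam_def)

lemma lam_mset_set:
  "finite X \<Longrightarrow> lam (mset_set X) S = card {B \<in> X. S \<subseteq> B}"
  by (simp add: lam_def)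

lemma size_triples: "finite V \<Longrightarrow> size (triples V) = card V choose 3"
  by (simp add: triples_def n_subsets)

lemma lam_triples_3subset:
  assumes "finite V" "S \<subseteq> V" "card S = 3"
  shows "lam (triples V) S = 1"
proof -
  have "{B \<in> {B. B \<subseteq> V \<and> card B = 3}. S \<subseteq> B} = {S}"
  proof (intro equalityI subsetI)
    fix B assume "B \<in> {B \<in> {B. B \<subseteq> V \<and> card B = 3}. S \<subseteq> B}"
    with assms show "B \<in> {S}"
      using card_subset_eq[of B S] finite_subset[of B V] by auto
  qed (use assms in auto)
  then show ?thesis
    using assms(1) by (simp add: triples_def lam_mset_set)
qed

lemma lam_triples_pair:
  assumes "finite V" "x \<in> V" "y \<in> V" "x \<noteq> y"
  shows "lam (triples V) {x, y} = card V - 2"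
proof -
  have "{B \<in> {B. B \<subseteq> V \<and> card B = 3}. {x, y} \<subseteq> B} = (\<lambda>z. insert z {x, y}) ` (V - {x, y})"
  proof (intro equalityI subsetI)
    fix B assume B: "B \<in> {B \<in> {B. B \<subseteq> V \<and> card B = 3}. {x, y} \<subseteq> B}"
    then have "card (B - {x, y}) = 1"
      using assms(4) by (simp add: card_Diff_subset card_ge_0_finite)
    then obtain z where z: "B - {x, y} = {z}"
      by (meson card_1_singletonE)
    with B have "z \<in> V - {x, y}" and "B = insert z {x, y}"
      by auto
    then show "B \<in> (\<lambda>z. insert z {x, y}) ` (V - {x, y})"
      by (rule rev_image_eqI)
  qed (use assms in auto)
  moreover have "inj_on (\<lambda>z. insert z {x, y}) (V - {x, y})"
    by (auto simp: inj_on_def)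
  ultimately show ?thesis
    using assms by (simp add: triples_def lam_mset_set card_image card_Diff_subset)
qed

lemma in_repeat_mset_imp: "x \<in># repeat_mset k A \<Longrightarrow> x \<in># A"
  by (metis count_repeat_mset mult_0_right not_in_iff)

lemma TS_plus_triples: "TS V F \<Longrightarrow> TS V (F + repeat_mset k (triples V))"
  by (auto simp: TS_def triples_def dest!: in_repeat_mset_imp)

lemma j_balanced_3_plus_triples:
  assumes "finite V"
  shows "j_balanced 3 V (F + repeat_mset k (triples V)) \<longleftrightarrow> j_balanced 3 V F"
  using assms by (simp add: j_balanced_def lam_plus lam_repeat_mset lam_triples_3subset)

lemma defect_plus_triples:
  assumes "finite V" "x \<in> V" "y \<in> V" "x \<noteq> y"
  shows "defect (F + repeat_mset k (triples V)) (l + int (k * (card V - 2))) x y = defect F l x y"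
  using assms by (simp add: defect_def lam_plus lam_repeat_mset lam_triples_pair)

lemma pairs_near_iff_defect:
  "pairs_near V F l \<longleftrightarrow> (\<forall>x\<in>V. \<forall>y\<in>V. x \<noteq> y \<longrightarrow> defect F l x y \<in> {-1, 0, 1})"
proof -
  have shift: "a \<in> {l - 1, l, l + 1} \<longleftrightarrow> a - l \<in> {-1, 0, 1}" for a :: int
    by auto
  show ?thesis
    by (simp only: pairs_near_def defect_def shift)
qed

lemma lab_iso_cong:
  assumes "\<forall>x\<in>V. \<forall>y\<in>V. x \<noteq> y \<longrightarrow> d x y = d' x y"
  shows "lab_iso V d W g \<longleftrightarrow> lab_iso V d' W g"
  using assms unfolding lab_iso_def by metis

lemma nearly_2bal_C1_cong:
  assumes "\<forall>x\<in>V. \<forall>y\<in>V. x \<noteq> y \<longrightarrow> defect F l x y = defect F' l' x y"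
  shows "nearly_2bal_C1 V F l e \<longleftrightarrow> nearly_2bal_C1 V F' l' e"
  using assms by (simp add: nearly_2bal_C1_def pairs_near_iff_defect lab_iso_cong[OF assms])

lemma nearly_2bal_C2_cong:
  assumes "\<forall>x\<in>V. \<forall>y\<in>V. x \<noteq> y \<longrightarrow> defect F l x y = defect F' l' x y"
  shows "nearly_2bal_C2 V F l e \<longleftrightarrow> nearly_2bal_C2 V F' l' e"
  using assms by (simp add: nearly_2bal_C2_def pairs_near_iff_defect lab_iso_cong[OF assms])

lemma three_mult_choose_three: "3 * (n choose 3) = (n - 2) * (n choose 2)"
  using binomial_absorption[of 2 n] binomial_absorb_comp[of n 2] by simp

lemma two_mult_choose_two: "2 * (n choose 2) = n * (n - 1)"
  using times_binomial_minus1_eq[of 2 n] by simp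

lemma real_choose_three: "real (n choose 3) = real n * (real n - 1) * (real n - 2) / 6"
proof (cases "n < 2")
  case True
  then have "n = 0 \<or> n = 1" by auto
  then show ?thesis by auto
next
  case False
  have "6 * (n choose 3) = 2 * (3 * (n choose 3))"
    by simp
  also have "\<dots> = n * (2 * ((n - 1) choose 2))"
    using binomial_absorption[of 2 n] by (simp add: numeral_3_eq_3)
  also have "\<dots> = n * ((n - 1) * (n - 2))"
    using two_mult_choose_two[of "n - 1"] by (simp add: numeral_2_eq_2)
  finally have "6 * (n choose 3) = n * ((n - 1) * (n - 2))" .
  then have "6 * real (n choose 3) = real n * (real (n - 1) * real (n - 2))"
    by (metis of_nat_mult of_nat_numeral)
  with False show ?thesis
    by simp
qed

lemma lambda_shift:
  "real_of_int (l + int (k * (v - 2))) * real v * (real v - 1) / 6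
     = real_of_int l * real v * (real v - 1) / 6 + real (k * (v choose 3))"
proof (cases "v < 2")
  case True
  then have "v = 0 \<or> v = 1" by auto
  then show ?thesis by auto
next
  case False
  then show ?thesis
    by (simp add: real_choose_three field_simps)
qed

lemma assoc_pair_plus_triples:
  assumes "assoc_pair v b l e"
  shows "assoc_pair v (b + k * (v choose 3)) (l + int (k * (v - 2))) e"
proof -
  define c d where "c = int (k * (v choose 3))" and "d = int (k * (v - 2))"
  have "3 * (k * (v choose 3)) = k * (v - 2) * (v choose 2)"
    using three_mult_choose_three[of v] by (simp add: ac_simps)
  then have "int (3 * (k * (v choose 3))) = int (k * (v - 2) * (v choose 2))"
    by (rule arg_cong)
  then have "3 * c = d * int (v choose 2)"
    unfolding c_def d_def by (simp only: of_nat_mult of_nat_numeral)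
  with assms show ?thesis
    unfolding assoc_pair_def of_nat_add c_def[symmetric] d_def[symmetric]
    by (simp add: algebra_simps)
qed

lemma C1_plus_triples:
  assumes "C1 v b l"
  shows "C1 v (b + k * (v choose 3)) (l + int (k * (v - 2)))"
proof -
  have mod3: "(l + int (k * (v - 2))) mod 3 = l mod 3" if "v mod 6 = 5"
  proof -
    from that have "3 dvd v - 2"
      by presburger
    then obtain m where "k * (v - 2) = 3 * m"
      by (metis dvd_mult dvd_def)
    then show ?thesis
      by simp
  qed
  have mod6: "(l + int (k * (v - 2))) mod 6 = l mod 6" if "v mod 6 = 2"
  proof -
    from that have "6 dvd v - 2"
      by presburger
    then obtain m where "k * (v - 2) = 6 * m"
      by (metis dvd_mult dvd_def)
    then show ?thesis
      by simp
  qed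
  define n where "n = k * (v choose 3)"
  have "\<lfloor>x + real n\<rfloor> = \<lfloor>x\<rfloor> + int n" and "\<lceil>x + real n\<rceil> = \<lceil>x\<rceil> + int n" for x :: real
    using floor_add_int[of x "int n"] ceiling_add_of_int[of x "int n"] by simp_all
  with assms mod3 mod6 show ?thesis
    unfolding C1_def lambda_shift of_nat_add n_def[symmetric] by auto
qed

lemma C2_plus_triples:
  assumes "C2 v b l"
  shows "C2 v (b + k * (v choose 3)) (l + int (k * (v - 2)))"
  using assms unfolding C2_def lambda_shift by auto

lemma NWBTS_plus_triples:
  assumes "NWBTS V F"
  shows "NWBTS V (F + repeat_mset k (triples V))"
proof -
  let ?F = "F + repeat_mset k (triples V)"
  obtain l e where pair: "assoc_pair (card V) (size F) l e"
    and cond: "C1 (card V) (size F) l \<and> nearly_2bal_C1 V F l e \<or>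
               C2 (card V) (size F) l \<and> nearly_2bal_C2 V F l e"
    using assms by (auto simp: NWBTS_def)
  have TS: "TS V F" and fin: "finite V" and bal: "j_balanced 3 V F"
    using assms by (auto simp: NWBTS_def TS_def)
  define l' where "l' = l + int (k * (card V - 2))"
  have size: "size ?F = size F + k * (card V choose 3)"
    using fin by (simp add: size_triples)
  have "\<forall>x\<in>V. \<forall>y\<in>V. x \<noteq> y \<longrightarrow> defect ?F l' x y = defect F l x y"
    using defect_plus_triples[OF fin] unfolding l'_def by blast
  then have "nearly_2bal_C1 V ?F l' e = nearly_2bal_C1 V F l e"
    and "nearly_2bal_C2 V ?F l' e = nearly_2bal_C2 V F l e"
    by (rule nearly_2bal_C1_cong, rule nearly_2bal_C2_cong)
  with cond have "C1 (card V) (size ?F) l' \<and> nearly_2bal_C1 V ?F l' e \<or>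
                  C2 (card V) (size ?F) l' \<and> nearly_2bal_C2 V ?F l' e"
    unfolding size l'_def using C1_plus_triples C2_plus_triples by blast
  moreover have "assoc_pair (card V) (size ?F) l' e"
    unfolding size l'_def using pair by (rule assoc_pair_plus_triples)
  ultimately show ?thesis
    unfolding NWBTS_def using TS_plus_triples[OF TS] bal fin
    by (auto simp: j_balanced_3_plus_triples)
qed

lemma lam_mset_map_set: "lam (mset (map set L)) S = length (filter (\<lambda>t. S \<subseteq> set t) L)"
  unfolding lam_def by (induction L) auto

lemma j_balanced_3_if_simple:
  assumes "\<forall>B\<in>#F. card B = 3" and "\<forall>B. count F B \<le> 1"
  shows "j_balanced 3 V F"
proof -
  have at_most_one: "lam F S \<le> 1" if "card S = 3" for S
  proof -
    have "filter_mset (\<lambda>B. S \<subseteq> B) F = filter_mset (\<lambda>B. B = S) F"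
    proof (rule filter_mset_cong[OF refl])
      fix B assume "B \<in># F"
      with assms(1) that show "S \<subseteq> B \<longleftrightarrow> B = S"
        using card_subset_eq[of B S] card_ge_0_finite[of B] by auto
    qed
    then have "lam F S = count F S"
      by (simp add: lam_def filter_eq_replicate_mset)
    with assms(2) show ?thesis
      by simp
  qed
  show ?thesis
    unfolding j_balanced_def
  proof (intro allI impI)
    fix S T :: "'a set" assume "card S = 3" "card T = 3"
    with at_most_one[of S] at_most_one[of T] show "\<bar>int (lam F S) - int (lam F T)\<bar> \<le> 1"
      by arith
  qed
qed

definition simple_block_list :: "nat \<Rightarrow> nat list list \<Rightarrow> bool" where
  "simple_block_list v L \<longleftrightarrow> distinct (map set L) \<and>
     (\<forall>t\<in>set L. length t = 3 \<and> distinct t \<and> (\<forall>x\<in>set t. x < v))"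

definition has_defect_graph :: "nat list list \<Rightarrow> nat \<Rightarrow> int \<Rightarrow> (nat \<Rightarrow> nat \<Rightarrow> int) \<Rightarrow> bool" where
  "has_defect_graph L v l g \<longleftrightarrow> (\<forall>x\<in>set [0..<v]. \<forall>y\<in>set [0..<v]. x \<noteq> y \<longrightarrow>
     int (length (filter (\<lambda>t. {x, y} \<subseteq> set t) L)) - l = g x y \<and> g x y \<in> {-1, 0, 1})"

lemma simple_block_listD:
  assumes "simple_block_list v L" and "3 \<le> v"
  shows "TS {..<v} (mset (map set L))"
    and "j_balanced 3 {..<v} (mset (map set L))"
proof -
  have blocks: "\<forall>B\<in>#mset (map set L). B \<subseteq> {..<v} \<and> card B = 3"
    using assms(1) by (auto simp: simple_block_list_def distinct_card)
  with assms(2) show "TS {..<v} (mset (map set L))"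
    by (simp add: TS_def)
  have "\<forall>B. count (mset (map set L)) B \<le> 1"
    using assms(1) by (simp add: simple_block_list_def distinct_count_atmost_1)
  with blocks show "j_balanced 3 {..<v} (mset (map set L))"
    by (simp add: j_balanced_3_if_simple)
qed

lemma has_defect_graphD:
  assumes "has_defect_graph L v l g"
  shows "pairs_near {..<v} (mset (map set L)) l"
    and "lab_iso {..<v} (defect (mset (map set L)) l) {..<v} g"
proof -
  have agree: "\<forall>x\<in>{..<v}. \<forall>y\<in>{..<v}. x \<noteq> y \<longrightarrow>
      defect (mset (map set L)) l x y = g x y \<and> g x y \<in> {-1, 0, 1}"
    using assms unfolding has_defect_graph_def defect_def lam_mset_map_set set_upt lessThan_atLeast0
    by simp
  then show "pairs_near {..<v} (mset (map set L)) l"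
    by (simp add: pairs_near_iff_defect)
  from agree have "lab_iso {..<v} (defect (mset (map set L)) l) {..<v} g \<longleftrightarrow>
      lab_iso {..<v} g {..<v} g"
    by (intro lab_iso_cong) blast
  moreover have "lab_iso {..<v} g {..<v} g"
    unfolding lab_iso_def by (rule exI[of _ id]) simp
  ultimately show "lab_iso {..<v} (defect (mset (map set L)) l) {..<v} g"
    by blast
qed

lemma NWBTS_block_list_C1:
  assumes "simple_block_list v L" "3 \<le> v" "has_defect_graph L v l (Gmod e)"
    and "assoc_pair v (length L) l e" "C1 v (length L) l" "e \<in> {-2, -1, 1, 2}"
  shows "NWBTS {..<v} (mset (map set L))"
  using assms simple_block_listD[OF assms(1,2)] has_defect_graphD[OF assms(3)]
  by (auto simp: NWBTS_def nearly_2bal_C1_def)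

lemma NWBTS_block_list_C2:
  assumes "simple_block_list v L" "3 \<le> v" "has_defect_graph L v l g"
    and "assoc_pair v (length L) l e" "C2 v (length L) l"
    and "if e mod 2 = int (v div 2) mod 2 then g = H0 v e
         else (int v - 6 + 2 * e \<ge> 0 \<and> int v - 2 - 2 * e \<ge> 0 \<and> g = H1 v e)
            \<or> (int v - 2 + 2 * e \<ge> 0 \<and> int v - 6 - 2 * e \<ge> 0 \<and> g = H2 v e)"
  shows "NWBTS {..<v} (mset (map set L))"
  using assms simple_block_listD[OF assms(1,2)] has_defect_graphD[OF assms(3)]
  by (auto simp: NWBTS_def nearly_2bal_C2_def Let_def split: if_splits)

definition blocks9 :: "nat list list" where
  "blocks9 = [[0,1,2],[0,1,4],[0,2,6],[0,5,7],[1,3,7],[1,5,6],[2,3,5],[2,4,7],[3,4,6]]"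

lemma NWBTS_blocks9: "NWBTS {..<8} (mset (map set blocks9))"
proof (rule NWBTS_block_list_C2[where l = 1 and e = "-1" and g = "H1 8 (-1)"])
  show "simple_block_list 8 blocks9" by code_simp
  show "has_defect_graph blocks9 8 1 (H1 8 (-1))" by code_simp
qed (simp_all add: blocks9_def assoc_pair_def choose_two C2_def)

definition blocks10 :: "nat list list" where
  "blocks10 = [[0,1,2],[0,1,3],[0,4,6],[0,5,7],[1,4,7],[1,5,6],[2,3,6],[2,3,7],[2,4,5],[3,4,5]]"

lemma NWBTS_blocks10: "NWBTS {..<8} (mset (map set blocks10))"
proof (rule NWBTS_block_list_C2[where l = 1 and e = 2 and g = "H0 8 2"])
  show "simple_block_list 8 blocks10" by code_simp
  show "has_defect_graph blocks10 8 1 (H0 8 2)" by code_simp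
qed (simp_all add: blocks10_def assoc_pair_def choose_two C2_def)

definition blocks18 :: "nat list list" where
  "blocks18 = [[0,1,2],[0,2,3],[0,3,4],[0,3,5],[0,4,6],[0,5,7],[0,6,7],[1,3,6],[1,3,7],[1,4,5],[1,4,6],[1,5,7],[2,4,5],[2,4,7],[2,5,6],[2,6,7],[3,4,7],[3,5,6]]"

lemma NWBTS_blocks18: "NWBTS {..<8} (mset (map set blocks18))"
proof (rule NWBTS_block_list_C1[where l = 2 and e = "-2"])
  show "simple_block_list 8 blocks18" by code_simp
  show "has_defect_graph blocks18 8 2 (Gmod (-2))" by code_simp
qed (simp_all add: blocks18_def assoc_pair_def choose_two C1_def)

definition blocks19 :: "nat list list" where
  "blocks19 = [[0,1,2],[0,1,3],[0,1,4],[0,3,4],[0,5,6],[0,5,7],[0,6,7],[1,2,5],[1,2,6],[1,3,5],[1,4,7],[1,6,7],[2,3,6],[2,3,7],[2,4,5],[2,4,7],[3,4,6],[3,5,7],[4,5,6]]"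

lemma NWBTS_blocks19: "NWBTS {..<8} (mset (map set blocks19))"
proof (rule NWBTS_block_list_C1[where l = 2 and e = 1])
  show "simple_block_list 8 blocks19" by code_simp
  show "has_defect_graph blocks19 8 2 (Gmod (1))" by code_simp
qed (simp_all add: blocks19_def assoc_pair_def choose_two C1_def)

definition blocks27 :: "nat list list" where
  "blocks27 = [[0,1,2],[0,1,3],[0,1,4],[0,1,5],[0,2,3],[0,4,6],[0,4,7],[0,5,6],[0,5,7],[0,6,7],[1,2,4],[1,2,6],[1,3,5],[1,3,7],[1,4,6],[1,5,7],[1,6,7],[2,3,6],[2,3,7],[2,4,5],[2,4,7],[2,5,6],[2,5,7],[3,4,5],[3,4,6],[3,4,7],[3,5,6]]"

lemma NWBTS_blocks27: "NWBTS {..<8} (mset (map set blocks27))"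
proof (rule NWBTS_block_list_C2[where l = 3 and e = "-3" and g = "H2 8 (-3)"])
  show "simple_block_list 8 blocks27" by code_simp
  show "has_defect_graph blocks27 8 3 (H2 8 (-3))" by code_simp
qed (simp_all add: blocks27_def assoc_pair_def choose_two C2_def)

definition blocks28 :: "nat list list" where
  "blocks28 = [[0,1,2],[0,1,3],[0,1,4],[0,1,5],[0,2,3],[0,2,4],[0,3,6],[0,4,7],[0,5,6],[0,5,7],[0,6,7],[1,2,3],[1,2,6],[1,3,7],[1,4,5],[1,4,6],[1,5,7],[1,6,7],[2,3,5],[2,3,7],[2,4,6],[2,4,7],[2,5,6],[2,5,7],[3,4,5],[3,4,6],[3,4,7],[3,5,6]]"

lemma NWBTS_blocks28: "NWBTS {..<8} (mset (map set blocks28))"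
proof (rule NWBTS_block_list_C2[where l = 3 and e = 0 and g = "H0 8 0"])
  show "simple_block_list 8 blocks28" by code_simp
  show "has_defect_graph blocks28 8 3 (H0 8 0)" by code_simp
qed (simp_all add: blocks28_def assoc_pair_def choose_two C2_def)

definition blocks29 :: "nat list list" where
  "blocks29 = [[0,1,2],[0,1,3],[0,1,4],[0,1,5],[0,2,3],[0,2,4],[0,2,6],[0,4,7],[0,5,6],[0,5,7],[0,6,7],[1,2,3],[1,2,6],[1,3,7],[1,4,5],[1,4,6],[1,5,7],[1,6,7],[2,3,5],[2,4,5],[2,4,7],[2,5,7],[2,6,7],[3,4,5],[3,4,6],[3,4,7],[3,5,6],[3,6,7],[4,5,6]]"

lemma NWBTS_blocks29: "NWBTS {..<8} (mset (map set blocks29))"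
proof (rule NWBTS_block_list_C2[where l = 3 and e = 3 and g = "H1 8 3"])
  show "simple_block_list 8 blocks29" by code_simp
  show "has_defect_graph blocks29 8 3 (H1 8 3)" by code_simp
qed (simp_all add: blocks29_def assoc_pair_def choose_two C2_def)

definition blocks37 :: "nat list list" where
  "blocks37 = [[0,1,2],[0,1,3],[0,1,4],[0,2,3],[0,2,4],[0,2,5],[0,2,6],[0,3,5],[0,3,7],[0,4,6],[0,4,7],[0,5,6],[0,5,7],[0,6,7],[1,2,3],[1,2,7],[1,3,5],[1,3,6],[1,4,5],[1,4,6],[1,4,7],[1,5,6],[1,5,7],[1,6,7],[2,3,4],[2,3,6],[2,4,5],[2,4,7],[2,5,6],[2,5,7],[2,6,7],[3,4,5],[3,4,6],[3,4,7],[3,5,7],[3,6,7],[4,5,6]]"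

lemma NWBTS_blocks37: "NWBTS {..<8} (mset (map set blocks37))"
proof (rule NWBTS_block_list_C1[where l = 4 and e = "-1"])
  show "simple_block_list 8 blocks37" by code_simp
  show "has_defect_graph blocks37 8 4 (Gmod (-1))" by code_simp
qed (simp_all add: blocks37_def assoc_pair_def choose_two C1_def)

definition blocks38 :: "nat list list" where
  "blocks38 = [[0,1,2],[0,1,3],[0,1,4],[0,1,5],[0,1,6],[0,2,3],[0,2,4],[0,2,5],[0,3,7],[0,4,6],[0,4,7],[0,5,6],[0,5,7],[0,6,7],[1,2,3],[1,2,4],[1,2,6],[1,2,7],[1,3,4],[1,3,5],[1,4,7],[1,5,6],[1,5,7],[1,6,7],[2,3,5],[2,3,6],[2,3,7],[2,4,5],[2,4,6],[2,5,7],[2,6,7],[3,4,5],[3,4,6],[3,4,7],[3,5,6],[3,6,7],[4,5,6],[4,5,7]]"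

lemma NWBTS_blocks38: "NWBTS {..<8} (mset (map set blocks38))"
proof (rule NWBTS_block_list_C1[where l = 4 and e = 2])
  show "simple_block_list 8 blocks38" by code_simp
  show "has_defect_graph blocks38 8 4 (Gmod (2))" by code_simp
qed (simp_all add: blocks38_def assoc_pair_def choose_two C1_def)

definition blocks46 :: "nat list list" where
  "blocks46 = [[0,1,2],[0,1,3],[0,1,4],[0,1,5],[0,1,6],[0,1,7],[0,2,3],[0,2,4],[0,2,5],[0,2,6],[0,3,4],[0,3,5],[0,3,7],[0,4,6],[0,4,7],[0,5,6],[0,5,7],[0,6,7],[1,2,3],[1,2,4],[1,2,5],[1,2,7],[1,3,4],[1,3,5],[1,3,6],[1,4,6],[1,4,7],[1,5,6],[1,5,7],[1,6,7],[2,3,6],[2,3,7],[2,4,5],[2,4,6],[2,4,7],[2,5,6],[2,5,7],[2,6,7],[3,4,5],[3,4,6],[3,4,7],[3,5,6],[3,5,7],[3,6,7],[4,5,6],[4,5,7]]"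

lemma NWBTS_blocks46: "NWBTS {..<8} (mset (map set blocks46))"
proof (rule NWBTS_block_list_C2[where l = 5 and e = "-2" and g = "H0 8 (-2)"])
  show "simple_block_list 8 blocks46" by code_simp
  show "has_defect_graph blocks46 8 5 (H0 8 (-2))" by code_simp
qed (simp_all add: blocks46_def assoc_pair_def choose_two C2_def)

definition blocks47 :: "nat list list" where
  "blocks47 = [[0,1,2],[0,1,3],[0,1,4],[0,1,5],[0,1,6],[0,1,7],[0,2,3],[0,2,4],[0,2,5],[0,2,6],[0,2,7],[0,3,4],[0,3,6],[0,4,5],[0,4,7],[0,5,6],[0,5,7],[0,6,7],[1,2,3],[1,2,4],[1,2,6],[1,2,7],[1,3,4],[1,3,5],[1,3,7],[1,4,5],[1,4,6],[1,5,6],[1,5,7],[1,6,7],[2,3,5],[2,3,6],[2,3,7],[2,4,5],[2,4,6],[2,4,7],[2,5,6],[2,5,7],[3,4,5],[3,4,6],[3,4,7],[3,5,6],[3,5,7],[3,6,7],[4,5,6],[4,5,7],[4,6,7]]"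

lemma NWBTS_blocks47: "NWBTS {..<8} (mset (map set blocks47))"
proof (rule NWBTS_block_list_C2[where l = 5 and e = 1 and g = "H1 8 1"])
  show "simple_block_list 8 blocks47" by code_simp
  show "has_defect_graph blocks47 8 5 (H1 8 1)" by code_simp
qed (simp_all add: blocks47_def assoc_pair_def choose_two C2_def)

lemma base_designs:
  assumes "r \<in> {9, 10, 18, 19, 27, 28, 29, 37, 38, 46, 47}"
  shows "\<exists>L. length L = r \<and> NWBTS {..<8::nat} (mset (map set L))"
proof -
  have "length blocks9 = 9" "length blocks10 = 10" "length blocks18 = 18" "length blocks19 = 19"
    "length blocks27 = 27" "length blocks28 = 28" "length blocks29 = 29" "length blocks37 = 37"
    "length blocks38 = 38" "length blocks46 = 46" "length blocks47 = 47"
    by (simp_all add: blocks9_def blocks10_def blocks18_def blocks19_def blocks27_def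
        blocks28_def blocks29_def blocks37_def blocks38_def blocks46_def blocks47_def)
  with assms show ?thesis
    using NWBTS_blocks9 NWBTS_blocks10 NWBTS_blocks18 NWBTS_blocks19 NWBTS_blocks27
      NWBTS_blocks28 NWBTS_blocks29 NWBTS_blocks37 NWBTS_blocks38 NWBTS_blocks46 NWBTS_blocks47
    by blast
qed

theorem lemmaA3:
  fixes b :: nat
  assumes "b mod 56 \<in> {9, 10, 18, 19, 27, 28, 29, 37, 38, 46, 47}"
  shows "\<exists>(V :: nat set) (F :: nat set multiset). card V = 8 \<and> size F = b \<and> NWBTS V F"
proof -
  obtain L :: "nat list list" where L: "length L = b mod 56" "NWBTS {..<8} (mset (map set L))"
    using base_designs[OF assms] by blast
  let ?F = "mset (map set L) + repeat_mset (b div 56) (triples {..<8::nat})"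
  have "size (triples {..<8::nat}) = 56"
    by (simp add: size_triples numeral_eq_Suc)
  with L(1) have "size ?F = b"
    by simp
  moreover have "NWBTS {..<8} ?F"
    using L(2) by (rule NWBTS_plus_triples)
  ultimately show ?thesis
    by (intro exI[of _ "{..<8}"] exI[of _ ?F]) simp
qed

end
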